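(* Let $m\ge 2$ be fixed and assume (A1)–(A4). Let $X_{\mathbf 1}$ be the number of coupons collected by all $m$ collectors. Then: (i) if $a_1/n\to0$ and $a_2/n\to0$, then $\mathbb{E}(X_{\mathbf 1})\sim\operatorname{Var}(X_{\mathbf 1})$; (ii) if $a_1/n\to0$ and $a_2/n\to1$, then $\mathbb{E}(a_1-X_{\mathbf 1})\sim\operatorname{Var}(X_{\mathbf 1})$; (iii) if $a_1/n\to1$ and $a_2/n\to1$, then $\mathbb{E}\big(X_{\mathbf 1}+(m-1)n-\sum_{i=1}^m a_i\big)\sim\operatorname{Var}(X_{\mathbf 1})$. No assumption on convergence of $\operatorname{Var}(X_{\mathbf 1})$ is needed.
   Context: Coupon collector model: there are $n$ distinct coupons and $m$ collectors acting independently; collector $i$ collects a uniformly random subset of exactly $a_i$ distinct coupons, independently of the others. We consider a sequence of such models indexed by $n$, with $m$ fixed and $a_i=a_i(n)$, under the asymptotic assumptions: (A1) $n\to\infty$; (A2) $a_i\to\infty$ and $n-a_i\to\infty$ for each $i$; (A3) $1\le a_1\le a_2\le\cdots\le a_m\le n-1$; (A4) $a_i/n\to\alpha_i\in[0,1]$ for each $i$. $x_n\sim y_n$ means $x_n/y_n\to1$. *)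

theory Defs
  imports "HOL-Probability.Probability" "HOL-Library.Landau_Symbols"
begin

text \<open>The outcome is the
  tuple of collected sets (outside {1..m} the value is the empty set).\<close>

definition coupon_pmf :: "nat \<Rightarrow> nat \<Rightarrow> (nat \<Rightarrow> nat) \<Rightarrow> (nat \<Rightarrow> nat set) pmf" where
  "coupon_pmf n m a =
     Pi_pmf {1..m} {} (\<lambda>i. pmf_of_set {S. S \<subseteq> {..<n} \<and> card S = a i})"

definition X_all :: "nat \<Rightarrow> (nat \<Rightarrow> nat set) \<Rightarrow> nat" where
  "X_all m S = card (\<Inter>i\<in>{1..m}. S i)"

definition E_cc :: "nat \<Rightarrow> nat \<Rightarrow> (nat \<Rightarrow> nat) \<Rightarrow> ((nat \<Rightarrow> nat set) \<Rightarrow> real) \<Rightarrow> real" where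
  "E_cc n m a Y = measure_pmf.expectation (coupon_pmf n m a) Y"

definition Var_X :: "nat \<Rightarrow> nat \<Rightarrow> (nat \<Rightarrow> nat) \<Rightarrow> real" where
  "Var_X n m a = measure_pmf.variance (coupon_pmf n m a) (\<lambda>S. real (X_all m S))"

end

theory Submission
  imports Defs
begin

text \<open>Writing \<open>X\<close> as a sum of indicators of the coupons held by every collector gives
  \<open>E X = n P\<close> and \<open>E X\<^sup>2 = n P + n (n - 1) P R\<close> with \<open>P = \<Prod> a\<^sub>i / n\<close> and
  \<open>R = \<Prod> (a\<^sub>i - 1) / (n - 1)\<close>, hence \<open>Var X = n P (1 - (n P - (n - 1) R))\<close>.
  Each regime then reduces to a bound \<open>\<bar>Var X - E T\<bar> \<le> \<epsilon>\<^sub>n \<bar>E T\<bar>\<close> with \<open>\<epsilon>\<^sub>n \<rightarrow> 0\<close>: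
  in (i) the gap \<open>n P - (n - 1) R\<close> is \<open>O(a\<^sub>1/n + a\<^sub>2/n)\<close>; in (ii) the factors of collectors
  \<open>2..m\<close> tend to 1, leaving collector 1 with \<open>a\<^sub>1\<close> draws; in (iii), with \<open>u\<^sub>i = 1 - a\<^sub>i/n\<close>, both
  \<open>1 - (n P - (n - 1) R)\<close> and \<open>E T / n = \<Prod>(1 - u\<^sub>i) - 1 + \<Sum>u\<^sub>i\<close> are of second order in the
  \<open>u\<^sub>i\<close>, and an induction over the collectors shows that they agree up to a relative error
  \<open>O(\<Sum>u\<^sub>i + 1/n)\<close>.\<close>

lemma card_supersets_of_card:
  assumes U: "finite U" and B: "B \<subseteq> U" and k: "card B \<le> k"
  shows "card {S. S \<subseteq> U \<and> card S = k \<and> B \<subseteq> S} = (card U - card B) choose (k - card B)"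
proof -
  have fB: "finite B" using U B finite_subset by blast
  have "bij_betw (\<lambda>S. S - B) {S. S \<subseteq> U \<and> card S = k \<and> B \<subseteq> S}
          {T. T \<subseteq> U - B \<and> card T = k - card B}"
  proof (rule bij_betwI[where g = "\<lambda>T. T \<union> B"])
    show "(\<lambda>T. T \<union> B) \<in> {T. T \<subseteq> U - B \<and> card T = k - card B} \<rightarrow> {S. S \<subseteq> U \<and> card S = k \<and> B \<subseteq> S}"
    proof
      fix T assume T: "T \<in> {T. T \<subseteq> U - B \<and> card T = k - card B}"
      then have "card (T \<union> B) = card T + card B"
        using U fB by (subst card_Un_disjoint) (auto intro: finite_subset)
      then show "T \<union> B \<in> {S. S \<subseteq> U \<and> card S = k \<and> B \<subseteq> S}" using T B k by auto
    qed
  qed (use fB in \<open>auto simp: card_Diff_subset\<close>)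
  then have "card {S. S \<subseteq> U \<and> card S = k \<and> B \<subseteq> S} = card {T. T \<subseteq> U - B \<and> card T = k - card B}"
    by (rule bij_betw_same_card)
  also have "\<dots> = card (U - B) choose (k - card B)" using U by (simp add: n_subsets)
  finally show ?thesis using B fB by (simp add: card_Diff_subset)
qed

definition uniform_subset_pmf :: "nat \<Rightarrow> nat \<Rightarrow> nat set pmf" where
  "uniform_subset_pmf n k = pmf_of_set {S. S \<subseteq> {..<n} \<and> card S = k}"

lemma finite_subsets_of_card: "finite {S. S \<subseteq> {..<n::nat} \<and> card S = k}"
  by (rule finite_subset[of _ "Pow {..<n}"]) auto

lemma set_uniform_subset_pmf:
  "k \<le> n \<Longrightarrow> set_pmf (uniform_subset_pmf n k) = {S. S \<subseteq> {..<n} \<and> card S = k}"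
  unfolding uniform_subset_pmf_def
  by (rule set_pmf_of_set[OF _ finite_subsets_of_card]) (auto intro!: exI[of _ "{..<k}"])

lemma uniform_subset_pmf_superset_prob:
  assumes "k \<le> n" "B \<subseteq> {..<n}" "card B \<le> k"
  shows "measure_pmf.expectation (uniform_subset_pmf n k) (\<lambda>S. of_bool (B \<subseteq> S) :: real)
          = real ((n - card B) choose (k - card B)) / real (n choose k)"
proof -
  let ?A = "{S. S \<subseteq> {..<n} \<and> card S = k}"
  have card_A: "card ?A = n choose k" using n_subsets[of "{..<n}" k] by simp
  then have "?A \<noteq> {}" using assms(1) by (metis card.empty binomial_eq_0_iff not_le)
  moreover have "(\<Sum>S\<in>?A. of_bool (B \<subseteq> S) :: real) = real (card {S. S \<subseteq> {..<n} \<and> card S = k \<and> B \<subseteq> S})"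
    using finite_subsets_of_card by (simp add: sum.If_cases Int_def conj_ac)
  ultimately show ?thesis
    using card_supersets_of_card[of "{..<n}" B k] assms finite_subsets_of_card card_A
    by (simp add: uniform_subset_pmf_def integral_pmf_of_set)
qed

lemma coupon_pmf_altdef: "coupon_pmf n m a = Pi_pmf {1..m} {} (\<lambda>i. uniform_subset_pmf n (a i))"
  unfolding coupon_pmf_def uniform_subset_pmf_def ..

lemma set_coupon_pmf:
  assumes "\<forall>i\<in>{1..m}. a i \<le> n"
  shows "set_pmf (coupon_pmf n m a) = PiE_dflt {1..m} {} (\<lambda>i. {S. S \<subseteq> {..<n} \<and> card S = a i})"
  unfolding coupon_pmf_altdef using assms
  by (subst set_Pi_pmf) (auto simp: set_uniform_subset_pmf PiE_dflt_def)

lemma coupon_integrable: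
  assumes "\<forall>i\<in>{1..m}. a i \<le> n"
  shows "integrable (measure_pmf (coupon_pmf n m a)) (f :: _ \<Rightarrow> real)"
  using assms by (intro integrable_measure_pmf_finite)
    (simp add: set_coupon_pmf finite_PiE_dflt finite_subsets_of_card)

lemma coupon_pmf_joint_superset_prob:
  assumes "\<forall>i\<in>{1..m}. a i \<le> n \<and> card B \<le> a i" "B \<subseteq> {..<n}"
  shows "measure_pmf.expectation (coupon_pmf n m a) (\<lambda>S. \<Prod>i\<in>{1..m}. of_bool (B \<subseteq> S i) :: real)
     = (\<Prod>i\<in>{1..m}. real ((n - card B) choose (a i - card B)) / real (n choose a i))"
  unfolding coupon_pmf_altdef using assms
  by (subst expectation_prod_Pi_pmf)
     (auto intro!: prod.cong uniform_subset_pmf_superset_prob integrable_measure_pmf_finite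
           simp: set_uniform_subset_pmf finite_subsets_of_card)

lemma prod_of_bool_real: "finite A \<Longrightarrow> (\<Prod>i\<in>A. of_bool (P i) :: real) = of_bool (\<forall>i\<in>A. P i)"
  by (induction A rule: finite_induct) auto

lemma real_X_all_eq_sum:
  assumes "m \<ge> 1" "\<forall>i\<in>{1..m}. S i \<subseteq> {..<n}"
  shows "real (X_all m S) = (\<Sum>j<n. \<Prod>i\<in>{1..m}. of_bool ({j} \<subseteq> S i))"
proof -
  have "1 \<in> {1..m}" using assms(1) by simp
  then have "(\<Inter>i\<in>{1..m}. S i) = {j\<in>{..<n}. \<forall>i\<in>{1..m}. j \<in> S i}" using assms(2) by blast
  then show ?thesis unfolding X_all_def by (simp add: prod_of_bool_real sum.If_cases Int_def)
qed

lemma real_X_all_square_eq_sum: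
  assumes "m \<ge> 1" "\<forall>i\<in>{1..m}. S i \<subseteq> {..<n}"
  shows "(real (X_all m S))\<^sup>2 = (\<Sum>j<n. \<Sum>l<n. \<Prod>i\<in>{1..m}. of_bool ({j, l} \<subseteq> S i))"
  unfolding real_X_all_eq_sum[OF assms] power2_eq_square sum_product
  by (intro sum.cong refl) (auto simp: prod_of_bool_real)

lemma binomial_ratio_minus_one:
  assumes "1 \<le> k" "k \<le> n"
  shows "real ((n - 1) choose (k - 1)) / real (n choose k) = real k / real n"
proof -
  have "real k * real (n choose k) = real n * real ((n - 1) choose (k - 1))"
    using assms by (simp flip: of_nat_mult add: times_binomial_minus1_eq)
  then show ?thesis using assms by (simp add: field_simps)
qed

lemma binomial_ratio_minus_two:
  assumes "2 \<le> k" "k \<le> n"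
  shows "real ((n - 2) choose (k - 2)) / real (n choose k) = real k * (real k - 1) / (real n * (real n - 1))"
proof -
  have pos: "real ((n - 1) choose (k - 1)) > 0" using assms by simp
  have "real ((n - 2) choose (k - 2)) / real (n choose k)
      = real ((n - 1 - 1) choose (k - 1 - 1)) / real ((n - 1) choose (k - 1))
        * (real ((n - 1) choose (k - 1)) / real (n choose k))"
    using pos by (simp add: numeral_2_eq_2 diff_diff_add)
  also have "\<dots> = real (k - 1) / real (n - 1) * (real k / real n)"
    using assms by (simp only: binomial_ratio_minus_one)
  also have "\<dots> = real k * (real k - 1) / (real n * (real n - 1))" using assms by (simp add: of_nat_diff mult.commute)
  finally show ?thesis .
qed

lemma sum_diagonal_split:
  "(\<Sum>j<n. \<Sum>l<n. if j = l then x else y) = real n * x + real n * (real n - 1) * (y :: real)"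
proof -
  have "(\<Sum>l<n. if j = l then x else y) = x + (real n - 1) * y" if "j < n" for j
  proof -
    have "(\<Sum>l<n. if j = l then x else y) = x + (\<Sum>l\<in>{..<n} - {j}. y)"
      using that by (subst sum.remove[of _ j]) auto
    then show ?thesis using that by (simp add: of_nat_diff)
  qed
  then have "(\<Sum>j<n. \<Sum>l<n. if j = l then x else y) = (\<Sum>j<n. x + (real n - 1) * y)"
    by (intro sum.cong) auto
  also have "\<dots> = real n * x + real n * (real n - 1) * y" by (simp add: algebra_simps)
  finally show ?thesis .
qed

lemma coupon_moments:
  fixes a :: "nat \<Rightarrow> nat" and m n :: nat
  defines "P \<equiv> \<Prod>i\<in>{1..m}. real (a i) / real n"
    and "R \<equiv> \<Prod>i\<in>{1..m}. (real (a i) - 1) / (real n - 1)"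
  assumes m: "m \<ge> 1" and a: "\<forall>i\<in>{1..m}. 2 \<le> a i \<and> a i \<le> n"
  shows "measure_pmf.expectation (coupon_pmf n m a) (\<lambda>S. real (X_all m S)) = real n * P"
    and "measure_pmf.expectation (coupon_pmf n m a) (\<lambda>S. (real (X_all m S))\<^sup>2)
           = real n * P + real n * (real n - 1) * P * R"
proof -
  let ?M = "coupon_pmf n m a"
  have a': "\<forall>i\<in>{1..m}. a i \<le> n" using a by auto
  have sub: "\<forall>i\<in>{1..m}. S i \<subseteq> {..<n}" if "S \<in> set_pmf ?M" for S
    using that a' by (auto simp: set_coupon_pmf PiE_dflt_def)
  have single: "measure_pmf.expectation ?M (\<lambda>S. \<Prod>i\<in>{1..m}. of_bool ({j} \<subseteq> S i)) = P" if "j < n" for j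
    unfolding P_def using a that
    by (subst coupon_pmf_joint_superset_prob) (auto intro!: prod.cong binomial_ratio_minus_one[unfolded One_nat_def])
  have pair: "measure_pmf.expectation ?M (\<lambda>S. \<Prod>i\<in>{1..m}. of_bool ({j, l} \<subseteq> S i)) = P * R"
    if "j < n" "l < n" "j \<noteq> l" for j l
    unfolding P_def R_def prod.distrib[symmetric] using a that
    by (subst coupon_pmf_joint_superset_prob) (auto intro!: prod.cong binomial_ratio_minus_two[unfolded numeral_2_eq_2])
  have "measure_pmf.expectation ?M (\<lambda>S. real (X_all m S))
      = measure_pmf.expectation ?M (\<lambda>S. \<Sum>j<n. \<Prod>i\<in>{1..m}. of_bool ({j} \<subseteq> S i))"
    by (intro integral_cong_AE AE_pmfI) (auto simp: real_X_all_eq_sum[OF m sub])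
  also have "\<dots> = (\<Sum>j<n. P)"
    by (simp only: Bochner_Integration.integral_sum coupon_integrable[OF a'])
       (intro sum.cong refl single, simp)
  also have "\<dots> = real n * P" by simp
  finally show "measure_pmf.expectation ?M (\<lambda>S. real (X_all m S)) = real n * P" .
  have "measure_pmf.expectation ?M (\<lambda>S. (real (X_all m S))\<^sup>2)
      = measure_pmf.expectation ?M (\<lambda>S. \<Sum>j<n. \<Sum>l<n. \<Prod>i\<in>{1..m}. of_bool ({j, l} \<subseteq> S i))"
    by (intro integral_cong_AE AE_pmfI) (auto simp: real_X_all_square_eq_sum[OF m sub])
  also have "\<dots> = (\<Sum>j<n. \<Sum>l<n. if j = l then P else P * R)"
    by (simp only: Bochner_Integration.integral_sum coupon_integrable[OF a'])
       (intro sum.cong refl, use single pair in auto)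
  also have "\<dots> = real n * P + real n * (real n - 1) * P * R"
    by (simp add: sum_diagonal_split algebra_simps)
  finally show "measure_pmf.expectation ?M (\<lambda>S. (real (X_all m S))\<^sup>2)
      = real n * P + real n * (real n - 1) * P * R" .
qed

lemma coupon_mean_variance:
  fixes a :: "nat \<Rightarrow> nat" and m n :: nat
  defines "P \<equiv> \<Prod>i\<in>{1..m}. real (a i) / real n"
    and "R \<equiv> \<Prod>i\<in>{1..m}. (real (a i) - 1) / (real n - 1)"
  assumes m: "m \<ge> 1" and a: "\<forall>i\<in>{1..m}. 2 \<le> a i \<and> a i \<le> n"
  shows "E_cc n m a (\<lambda>S. real (X_all m S)) = real n * P"
    and "Var_X n m a = real n * P * (1 - (real n * P - (real n - 1) * R))"
    and "E_cc n m a (\<lambda>S. c - real (X_all m S)) = c - real n * P"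
    and "E_cc n m a (\<lambda>S. real (X_all m S) + c - d) = real n * P + c - d"
proof -
  have int: "integrable (measure_pmf (coupon_pmf n m a)) (f :: _ \<Rightarrow> real)" for f
    using a by (intro coupon_integrable) auto
  note moments = coupon_moments[OF m a, folded P_def R_def]
  show "E_cc n m a (\<lambda>S. real (X_all m S)) = real n * P"
    unfolding E_cc_def by (rule moments(1))
  show "Var_X n m a = real n * P * (1 - (real n * P - (real n - 1) * R))"
  proof -
    have "Var_X n m a = real n * P + real n * (real n - 1) * P * R - (real n * P)\<^sup>2"
      unfolding Var_X_def by (subst measure_pmf.variance_eq) (simp_all add: int moments)
    then show ?thesis by (simp add: algebra_simps power2_eq_square)
  qed
  show "E_cc n m a (\<lambda>S. c - real (X_all m S)) = c - real n * P"
    unfolding E_cc_def by (simp add: int moments)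
  show "E_cc n m a (\<lambda>S. real (X_all m S) + c - d) = real n * P + c - d"
    unfolding E_cc_def by (simp add: int moments)
qed

lemma prod_diff_le_sum_diff:
  fixes x y :: "'a \<Rightarrow> real"
  assumes "\<And>i. i \<in> A \<Longrightarrow> 0 \<le> y i \<and> y i \<le> x i \<and> x i \<le> 1"
  shows "(\<Prod>i\<in>A. x i) - (\<Prod>i\<in>A. y i) \<le> (\<Sum>i\<in>A. x i - y i)"
proof -
  have "(\<Prod>i\<in>A. x i) - (\<Prod>i\<in>A. y i) \<le> norm ((\<Prod>i\<in>A. x i) - (\<Prod>i\<in>A. y i))" by simp
  also have "\<dots> \<le> (\<Sum>i\<in>A. norm (x i - y i))"
    by (intro norm_prod_diff) (use assms in \<open>fastforce intro: order_trans\<close>)+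
  also have "\<dots> = (\<Sum>i\<in>A. x i - y i)" using assms by (intro sum.cong) auto
  finally show ?thesis .
qed

lemma sum_diff_mult_prod_le_prod_diff:
  fixes x y :: "'a \<Rightarrow> real"
  assumes "finite A" "\<And>i. i \<in> A \<Longrightarrow> 0 \<le> y i \<and> y i \<le> x i \<and> x i \<le> 1"
  shows "(\<Sum>i\<in>A. x i - y i) * (\<Prod>i\<in>A. y i) \<le> (\<Prod>i\<in>A. x i) - (\<Prod>i\<in>A. y i)"
  using assms
proof (induction A rule: finite_induct)
  case (insert a F)
  define X Y S where "X = (\<Prod>i\<in>F. x i)" and "Y = (\<Prod>i\<in>F. y i)" and "S = (\<Sum>i\<in>F. x i - y i)"
  have IH: "S * Y \<le> X - Y" using insert unfolding S_def X_def Y_def by simp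
  have a: "0 \<le> y a" "y a \<le> x a" "x a \<le> 1" using insert.prems by auto
  have Y: "0 \<le> Y" unfolding Y_def using insert.prems by (auto intro!: prod_nonneg)
  have S: "0 \<le> S" unfolding S_def using insert.prems by (auto intro!: sum_nonneg)
  have "(x a - y a + S) * (y a * Y) = (x a - y a) * y a * Y + y a * (S * Y)" by (simp add: algebra_simps)
  also have "\<dots> \<le> (x a - y a) * 1 * Y + x a * (X - Y)"
    using IH a Y S by (intro add_mono mult_mono) auto
  also have "\<dots> = x a * X - y a * Y" by (simp add: algebra_simps)
  finally show ?case using insert unfolding X_def Y_def S_def by simp
qed simp

lemma scaled_prod_gap_two_small:
  fixes p r :: "'a \<Rightarrow> real" and N :: real
  assumes A: "finite A" "j \<in> A" "k \<in> A" "j \<noteq> k" and N: "N \<ge> 2"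
    and pr: "\<And>i. i \<in> A \<Longrightarrow> 0 \<le> r i \<and> r i \<le> p i \<and> p i \<le> 1 \<and> p i - r i \<le> 1 / (N - 1)"
  shows "0 \<le> N * (\<Prod>i\<in>A. p i) - (N - 1) * (\<Prod>i\<in>A. r i)"
    and "N * (\<Prod>i\<in>A. p i) - (N - 1) * (\<Prod>i\<in>A. r i) \<le> p j + 2 * (real (card A) + 1) * (p j + p k)"
proof -
  define A' where "A' = A - {j, k}"
  have split: "(\<Prod>i\<in>A. f i) = f j * f k * (\<Prod>i\<in>A'. f i)" for f :: "'a \<Rightarrow> real"
  proof -
    have "A = insert j (insert k A')" "j \<notin> insert k A'" "k \<notin> A'" using A unfolding A'_def by auto
    moreover have "finite A'" using A(1) unfolding A'_def by simp
    ultimately show ?thesis by (metis finite_insert mult.assoc prod.insert)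
  qed
  define P' R' where "P' = (\<Prod>i\<in>A'. p i)" and "R' = (\<Prod>i\<in>A'. r i)"
  have pr': "\<And>i. i \<in> A' \<Longrightarrow> 0 \<le> r i \<and> r i \<le> p i \<and> p i \<le> 1" using pr unfolding A'_def by auto
  have R': "0 \<le> R'" "R' \<le> P'" "P' \<le> 1" unfolding P'_def R'_def using pr'
    by (auto intro!: prod_nonneg prod_mono prod_le_1 intro: order_trans)
  have "P' - R' \<le> (\<Sum>i\<in>A'. p i - r i)" unfolding P'_def R'_def by (rule prod_diff_le_sum_diff) (rule pr')
  also have "\<dots> \<le> real (card A') * (1 / (N - 1))" using pr unfolding A'_def by (intro sum_bounded_above) auto
  also have "\<dots> \<le> real (card A) * (1 / (N - 1))"
    using A N unfolding A'_def by (intro mult_right_mono) (auto intro: card_mono)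
  finally have gap': "P' - R' \<le> real (card A) / (N - 1)" by simp
  have pj: "0 \<le> r j" "r j \<le> p j" "p j \<le> 1" "p j - r j \<le> 1 / (N - 1)" using pr A by auto
  have pk: "0 \<le> r k" "r k \<le> p k" "p k \<le> 1" "p k - r k \<le> 1 / (N - 1)" using pr A by auto
  have R_le_P: "r j * r k * R' \<le> p j * p k * P'" using pj pk R' by (intro mult_mono) auto
  have "p j * p k * P' - r j * r k * R' = p j * p k * (P' - R') + (p j * (p k - r k) + r k * (p j - r j)) * R'"
    by (simp add: algebra_simps)
  also have "\<dots> \<le> p k * (real (card A) / (N - 1)) + (p j * (1 / (N - 1)) + p k * (1 / (N - 1))) * 1"
    using pj pk R' gap' N by (intro add_mono mult_mono) (auto simp: mult_le_one mult_left_le_one_le)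
  also have "\<dots> = (p k * real (card A) + p j + p k) / (N - 1)" by (simp add: add_divide_distrib)
  also have "\<dots> \<le> (real (card A) + 1) * (p j + p k) / (N - 1)"
  proof -
    have "0 \<le> p j * real (card A)" using pj by simp
    then show ?thesis using N by (intro divide_right_mono) (simp_all add: algebra_simps)
  qed
  finally have gap: "p j * p k * P' - r j * r k * R' \<le> (real (card A) + 1) * (p j + p k) / (N - 1)" .
  have "N * (p j * p k * P' - r j * r k * R') \<le> N * ((real (card A) + 1) * (p j + p k) / (N - 1))"
    using gap N by (intro mult_left_mono) auto
  also have "\<dots> = N / (N - 1) * ((real (card A) + 1) * (p j + p k))" by simp
  also have "\<dots> \<le> 2 * ((real (card A) + 1) * (p j + p k))"
    using N pj pk by (intro mult_right_mono) (auto simp: divide_le_eq)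
  finally have NPR: "N * (p j * p k * P' - r j * r k * R') \<le> 2 * (real (card A) + 1) * (p j + p k)"
    by (simp only: mult.assoc)
  have eq: "N * (p j * p k * P') - (N - 1) * (r j * r k * R') = r j * r k * R' + N * (p j * p k * P' - r j * r k * R')"
    by (simp add: algebra_simps)
  have "p k * P' \<le> 1" using pk R' by (intro mult_le_one) auto
  then have "p j * p k * P' \<le> p j" using pj by (simp add: mult_left_le mult.assoc)
  then show "0 \<le> N * (\<Prod>i\<in>A. p i) - (N - 1) * (\<Prod>i\<in>A. r i)"
    and "N * (\<Prod>i\<in>A. p i) - (N - 1) * (\<Prod>i\<in>A. r i) \<le> p j + 2 * (real (card A) + 1) * (p j + p k)"
    unfolding split P'_def[symmetric] R'_def[symmetric] eq using NPR R_le_P pj pk R' N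
    by (auto intro!: add_nonneg_nonneg mult_nonneg_nonneg)
qed

lemma scaled_prod_gap_near_one:
  fixes p r :: "'a \<Rightarrow> real" and A :: "'a set" and N k :: real
  defines "P \<equiv> \<Prod>i\<in>A. p i" and "R \<equiv> \<Prod>i\<in>A. r i"
  assumes A: "finite A" and N: "N > 1" and k: "k \<ge> 1"
    and pr: "\<And>i. i \<in> A \<Longrightarrow> 0 \<le> r i \<and> r i \<le> p i \<and> p i \<le> 1 \<and> p i - r i \<le> (1 - p i) / (N - 1)"
  shows "\<bar>k * P * (1 - (k * P - (k - 1) * R)) - (k - k * P)\<bar>
           \<le> (k - k * P) * ((1 - P) + k * real (card A) / (N - 1))"
proof -
  have R: "0 \<le> R" "R \<le> P" "P \<le> 1" unfolding P_def R_def using pr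
    by (auto intro!: prod_nonneg prod_mono prod_le_1 intro: order_trans)
  have P_le: "P \<le> p i" if "i \<in> A" for i
  proof -
    have "P = p i * (\<Prod>j\<in>A - {i}. p j)" unfolding P_def using A that by (simp add: prod.remove)
    also have "\<dots> \<le> p i" using pr that by (intro mult_left_le prod_le_1) (auto intro: order_trans)
    finally show ?thesis .
  qed
  have "P - R \<le> (\<Sum>i\<in>A. p i - r i)" unfolding P_def R_def by (rule prod_diff_le_sum_diff) (use pr in auto)
  also have "\<dots> \<le> real (card A) * ((1 - P) / (N - 1))"
  proof (intro sum_bounded_above)
    fix i assume "i \<in> A"
    then have "p i - r i \<le> (1 - p i) / (N - 1)" "(1 - p i) / (N - 1) \<le> (1 - P) / (N - 1)"
      using pr P_le N by (auto intro: divide_right_mono)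
    then show "p i - r i \<le> (1 - P) / (N - 1)" by linarith
  qed
  finally have gap: "P - R \<le> real (card A) * ((1 - P) / (N - 1))" .
  define Q where "Q = (1 - P)\<^sup>2 + (k - 1) * P * (P - R)"
  have "0 \<le> Q" unfolding Q_def using R k by simp
  have "Q \<le> (1 - P)\<^sup>2 + k * 1 * (real (card A) * ((1 - P) / (N - 1)))"
    unfolding Q_def using R k gap by (intro add_left_mono mult_mono) auto
  also have "\<dots> = (1 - P) * ((1 - P) + k * real (card A) / (N - 1))"
    by (simp add: algebra_simps power2_eq_square)
  finally have Q: "Q \<le> (1 - P) * ((1 - P) + k * real (card A) / (N - 1))" .
  have "k * P * (1 - (k * P - (k - 1) * R)) - (k - k * P) = - (k * Q)"
    unfolding Q_def by (simp add: algebra_simps power2_eq_square)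
  then have "\<bar>k * P * (1 - (k * P - (k - 1) * R)) - (k - k * P)\<bar> = k * Q"
    using \<open>0 \<le> Q\<close> k by simp
  also have "\<dots> \<le> k * ((1 - P) * ((1 - P) + k * real (card A) / (N - 1)))" using Q k by simp
  finally show ?thesis by (simp add: algebra_simps)
qed

lemma complement_prod_first_order:
  fixes u :: "'a \<Rightarrow> real" and A :: "'a set" and N c :: real
  defines "P \<equiv> \<Prod>i\<in>A. 1 - u i" and "R \<equiv> \<Prod>i\<in>A. 1 - c * u i" and "s \<equiv> \<Sum>i\<in>A. u i"
  assumes A: "finite A" and N: "N > 1" and c: "c = N / (N - 1)"
    and u: "\<And>i. i \<in> A \<Longrightarrow> 0 \<le> u i \<and> c * u i \<le> 1"
  shows "\<bar>N * (P - R) - (1 - P)\<bar> \<le> s * (c * s + 1 / (N - 1))"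
proof -
  have c1: "c \<ge> 1" using N c by (simp add: le_divide_eq)
  have Nc: "N * (c - 1) = c" "c - 1 = 1 / (N - 1)" using N c by (simp_all add: field_simps)
  have cu: "u i \<le> c * u i" if "i \<in> A" for i using u[OF that] c1 by (simp add: mult_le_cancel_right1)
  have s0: "0 \<le> s" unfolding s_def using u by (auto intro!: sum_nonneg)
  have uR: "\<And>i. i \<in> A \<Longrightarrow> 0 \<le> 1 - c * u i \<and> 1 - c * u i \<le> 1 - u i \<and> 1 - u i \<le> 1"
    using u cu by fastforce
  have uP: "\<And>i. i \<in> A \<Longrightarrow> 0 \<le> 1 - u i \<and> 1 - u i \<le> 1 \<and> (1::real) \<le> 1"
    using u cu by fastforce
  have uR1: "\<And>i. i \<in> A \<Longrightarrow> 0 \<le> 1 - c * u i \<and> 1 - c * u i \<le> 1 \<and> (1::real) \<le> 1"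
    using u c1 by fastforce
  have sum_cu: "(\<Sum>i\<in>A. (1 - u i) - (1 - c * u i)) = (c - 1) * s"
    unfolding s_def by (simp add: algebra_simps sum_distrib_left sum_subtractf)
  have PR: "P - R \<le> (c - 1) * s" "(c - 1) * s * R \<le> P - R"
    using prod_diff_le_sum_diff[of A "\<lambda>i. 1 - c * u i" "\<lambda>i. 1 - u i", OF uR]
      sum_diff_mult_prod_le_prod_diff[of A "\<lambda>i. 1 - c * u i" "\<lambda>i. 1 - u i", OF A uR]
    unfolding sum_cu P_def R_def by auto
  have P: "1 - P \<le> s" "s * P \<le> 1 - P"
    using prod_diff_le_sum_diff[of A "\<lambda>i. 1 - u i" "\<lambda>i. 1", OF uP]
      sum_diff_mult_prod_le_prod_diff[of A "\<lambda>i. 1 - u i" "\<lambda>i. 1", OF A uP]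
    unfolding P_def s_def by simp_all
  have R: "0 \<le> R" "1 - R \<le> c * s"
    using prod_diff_le_sum_diff[of A "\<lambda>i. 1 - c * u i" "\<lambda>i. 1", OF uR1] uR1
    unfolding R_def s_def by (auto simp: sum_distrib_left intro!: prod_nonneg)
  have "N * (P - R) - (1 - P) \<le> N * ((c - 1) * s) - s * P"
    using PR(1) P(2) N by (intro diff_mono mult_left_mono) auto
  also have "\<dots> = c * s - s * P" using Nc(1) by (metis mult.assoc)
  also have "\<dots> = s * (c - 1) + s * (1 - P)" by (simp add: algebra_simps)
  also have "\<dots> \<le> s * (c - 1) + s * (c * s)"
    using P(1) s0 c1 by (intro add_left_mono mult_left_mono) (auto intro: order_trans[OF _ mult_right_mono[of 1 c]])
  finally have up: "N * (P - R) - (1 - P) \<le> s * (c * s + 1 / (N - 1))" by (simp add: Nc(2) algebra_simps)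
  have "- (s * (c * s)) \<le> - (s * (1 - R))" using R(2) s0 by (simp add: mult_left_mono)
  also have "\<dots> \<le> c * s * R - s"
  proof -
    have "s \<le> c * s" using c1 s0 by (simp add: mult_le_cancel_right1)
    then show ?thesis using R(1) by (simp add: algebra_simps mult_left_mono)
  qed
  also have "c * s * R = N * ((c - 1) * s * R)" using Nc(1) by (metis mult.assoc)
  also have "N * ((c - 1) * s * R) - s \<le> N * (P - R) - (1 - P)"
    using PR(2) P(1) N by (intro diff_mono mult_left_mono) auto
  finally have "- (s * (c * s)) \<le> N * (P - R) - (1 - P)" .
  moreover have "0 \<le> s * (1 / (N - 1))" using s0 N by simp
  ultimately have low: "- (s * (c * s + 1 / (N - 1))) \<le> N * (P - R) - (1 - P)"
    by (simp add: distrib_left)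
  show ?thesis using up low by linarith
qed

lemma complement_prod_second_order:
  fixes u :: "'a \<Rightarrow> real" and A :: "'a set" and N c \<eta> :: real
  assumes A: "finite A" and N: "N > 1" and c: "c = N / (N - 1)" and \<eta>: "\<eta> \<ge> 0"
    and u: "\<And>i. i \<in> A \<Longrightarrow> 0 \<le> u i \<and> c * u i \<le> 1"
    and small: "c * (\<Sum>i\<in>A. u i) + 1 / (N - 1) \<le> \<eta> * (\<Prod>i\<in>A. 1 - u i)"
  shows "\<bar>(1 - (N * (\<Prod>i\<in>A. 1 - u i) - (N - 1) * (\<Prod>i\<in>A. 1 - c * u i)))
            - ((\<Prod>i\<in>A. 1 - u i) - 1 + (\<Sum>i\<in>A. u i))\<bar>
         \<le> \<eta> * ((\<Prod>i\<in>A. 1 - u i) - 1 + (\<Sum>i\<in>A. u i))"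
  using A u small
proof (induction A rule: finite_induct)
  case (insert a F)
  define P R s where "P = (\<Prod>i\<in>F. 1 - u i)" and "R = (\<Prod>i\<in>F. 1 - c * u i)" and "s = (\<Sum>i\<in>F. u i)"
  have c1: "c \<ge> 1" using N c by (simp add: le_divide_eq)
  have Nc: "(N - 1) * c = N" using N c by simp
  have le1: "x \<le> 1" if "0 \<le> x" "c * x \<le> 1" for x using mult_right_mono[of 1 c x] that c1 by linarith
  have ua: "0 \<le> u a" "u a \<le> 1" using insert.prems(1)[of a] le1 by auto
  have uF: "\<And>i. i \<in> F \<Longrightarrow> 0 \<le> u i \<and> c * u i \<le> 1" using insert.prems(1) by simp
  have uF1: "\<And>i. i \<in> F \<Longrightarrow> 0 \<le> 1 - u i \<and> 1 - u i \<le> 1 \<and> (1::real) \<le> 1"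
    using uF le1 by fastforce
  have P: "0 \<le> P" "s * P \<le> 1 - P" "0 \<le> s" unfolding P_def s_def
    using sum_diff_mult_prod_le_prod_diff[of F "\<lambda>i. 1 - u i" "\<lambda>i. 1", OF insert.hyps(1) uF1] uF1
    by (auto intro!: prod_nonneg sum_nonneg)
  have "c * s + 1 / (N - 1) \<le> c * (u a + s) + 1 / (N - 1)" using ua c1 by simp
  also have "\<dots> \<le> \<eta> * ((1 - u a) * P)" using insert.prems(2) insert.hyps unfolding P_def s_def by simp
  also have "\<dots> \<le> \<eta> * P" using ua P \<eta> by (intro mult_left_mono) (auto simp: mult_left_le_one_le)
  finally have small_F: "c * s + 1 / (N - 1) \<le> \<eta> * P" .
  have IH: "\<bar>(1 - (N * P - (N - 1) * R)) - (P - 1 + s)\<bar> \<le> \<eta> * (P - 1 + s)"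
    using insert.IH[OF uF small_F[unfolded P_def s_def]] unfolding P_def R_def s_def .
  have "\<bar>N * (P - R) - (1 - P)\<bar> \<le> s * (c * s + 1 / (N - 1))"
    unfolding P_def R_def s_def using insert.hyps(1) N c uF by (rule complement_prod_first_order)
  also have "\<dots> \<le> s * (\<eta> * P)" using small_F P by (intro mult_left_mono) auto
  also have "\<dots> \<le> \<eta> * (1 - P)" using P \<eta> by (simp add: mult.left_commute mult_left_mono)
  finally have first: "\<bar>N * (P - R) - (1 - P)\<bar> \<le> \<eta> * (1 - P)" .
  have "(N - 1) * ((1 - c * u a) * R) = (N - 1) * R - ((N - 1) * c) * (u a * R)"
    by (simp add: algebra_simps)
  then have R_step: "(N - 1) * ((1 - c * u a) * R) = (N - 1) * R - N * (u a * R)" unfolding Nc .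
  have "(1 - (N * ((1 - u a) * P) - (N - 1) * ((1 - c * u a) * R))) - ((1 - u a) * P - 1 + (u a + s))
      = ((1 - (N * P - (N - 1) * R)) - (P - 1 + s)) + u a * (N * (P - R) - (1 - P))"
    unfolding R_step by (simp add: algebra_simps)
  also have "\<bar>\<dots>\<bar> \<le> \<eta> * (P - 1 + s) + u a * (\<eta> * (1 - P))"
    using IH first ua by (intro abs_triangle_ineq[THEN order_trans] add_mono) (auto simp: abs_mult mult_left_mono)
  also have "\<dots> = \<eta> * ((1 - u a) * P - 1 + (u a + s))" by (simp add: algebra_simps)
  finally show ?case using insert.hyps unfolding P_def R_def s_def by simp
qed simp

lemma asymp_equiv_by_relative_error:
  fixes f g \<epsilon> :: "'a \<Rightarrow> real"
  assumes \<epsilon>: "(\<epsilon> \<longlongrightarrow> 0) F" and bound: "eventually (\<lambda>x. \<bar>g x - f x\<bar> \<le> \<epsilon> x * \<bar>f x\<bar>) F"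
  shows "f \<sim>[F] g"
proof -
  have "(\<lambda>x. g x - f x) \<in> o[F](f)"
  proof (rule landau_o.smallI)
    fix C :: real assume "C > 0"
    with \<epsilon> have "eventually (\<lambda>x. \<epsilon> x < C) F" by (rule order_tendstoD)
    with bound show "eventually (\<lambda>x. norm (g x - f x) \<le> C * norm (f x)) F"
      by eventually_elim (metis abs_ge_zero less_imp_le mult_right_mono order_trans real_norm_def)
  qed
  then have "g \<sim>[F] f" by (simp add: asymp_equiv_altdef)
  then show ?thesis by (rule asymp_equiv_symI)
qed

definition sorted_sizes :: "nat \<Rightarrow> nat \<Rightarrow> (nat \<Rightarrow> nat) \<Rightarrow> bool" where
  "sorted_sizes n m a \<longleftrightarrow> 2 \<le> a 1 \<and> (\<forall>i\<in>{1..<m}. a i \<le> a (Suc i)) \<and> a m \<le> n"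

lemma sorted_sizes_mono:
  assumes "sorted_sizes n m a" "1 \<le> j" "j \<le> k" "k \<le> m"
  shows "a j \<le> a k"
  using assms(3,4)
proof (induction k rule: dec_induct)
  case (step k)
  then show ?case using assms(1,2) unfolding sorted_sizes_def by (auto intro: order_trans)
qed simp

lemma sorted_sizes_bounds:
  assumes "sorted_sizes n m a" "i \<in> {1..m}"
  shows "2 \<le> a i" "a i \<le> n"
  using sorted_sizes_mono[OF assms(1), of 1 i] sorted_sizes_mono[OF assms(1), of i m] assms
  unfolding sorted_sizes_def by auto

lemma sorted_sizes_fractions:
  fixes a :: "nat \<Rightarrow> nat" and m n :: nat
  defines "p \<equiv> \<lambda>i. real (a i) / real n" and "r \<equiv> \<lambda>i. (real (a i) - 1) / (real n - 1)"
  assumes "sorted_sizes n m a" "i \<in> {1..m}"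
  shows "0 \<le> r i" and "r i \<le> p i" and "0 < p i" and "p i \<le> 1"
    and "p i - r i = (1 - p i) / (real n - 1)" and "p i - r i \<le> 1 / (real n - 1)"
proof -
  have "2 \<le> a i" "a i \<le> n" using sorted_sizes_bounds[OF assms(3,4)] by auto
  then have "2 \<le> real (a i)" "real (a i) \<le> real n" by simp_all
  then show "0 \<le> r i" "r i \<le> p i" "0 < p i" "p i \<le> 1" "p i - r i = (1 - p i) / (real n - 1)"
    and "p i - r i \<le> 1 / (real n - 1)" unfolding p_def r_def by (auto simp: field_simps)
qed

lemma variance_gap_small_sizes:
  fixes a :: "nat \<Rightarrow> nat" and m n :: nat
  defines "p \<equiv> \<lambda>i. real (a i) / real n"
  assumes m: "m \<ge> 2" and a: "sorted_sizes n m a"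
  shows "\<bar>Var_X n m a - E_cc n m a (\<lambda>S. real (X_all m S))\<bar>
           \<le> (p 1 + 2 * (real m + 1) * (p 1 + p 2)) * \<bar>E_cc n m a (\<lambda>S. real (X_all m S))\<bar>"
proof -
  define r where "r i = (real (a i) - 1) / (real n - 1)" for i
  define P R where "P = (\<Prod>i\<in>{1..m}. p i)" and "R = (\<Prod>i\<in>{1..m}. r i)"
  have sizes: "\<forall>i\<in>{1..m}. 2 \<le> a i \<and> a i \<le> n" using sorted_sizes_bounds[OF a] by auto
  have n: "2 \<le> n" using sorted_sizes_bounds[OF a, of 1] m by auto
  have pr: "0 \<le> r i \<and> r i \<le> p i \<and> p i \<le> 1 \<and> p i - r i \<le> 1 / (real n - 1)" if "i \<in> {1..m}" for i
    using sorted_sizes_fractions[OF a that] unfolding p_def r_def by auto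
  note gap = scaled_prod_gap_two_small[of "{1..m}" 1 2 "real n" r p, folded P_def R_def]
  have D: "0 \<le> real n * P - (real n - 1) * R" "real n * P - (real n - 1) * R \<le> p 1 + 2 * (real m + 1) * (p 1 + p 2)"
    using gap m n pr by auto
  have "0 \<le> P" unfolding P_def using pr by (intro prod_nonneg) (meson order_trans)
  have moments: "E_cc n m a (\<lambda>S. real (X_all m S)) = real n * P"
    "Var_X n m a = real n * P * (1 - (real n * P - (real n - 1) * R))"
    using coupon_mean_variance(1,2)[OF _ sizes] m unfolding P_def R_def p_def r_def by auto
  have "Var_X n m a - E_cc n m a (\<lambda>S. real (X_all m S)) = - (real n * P * (real n * P - (real n - 1) * R))"
    unfolding moments by (simp add: algebra_simps)
  moreover have "0 \<le> real n * P * (real n * P - (real n - 1) * R)" using D(1) \<open>0 \<le> P\<close> by simp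
  ultimately have "\<bar>Var_X n m a - E_cc n m a (\<lambda>S. real (X_all m S))\<bar> = real n * P * (real n * P - (real n - 1) * R)"
    by simp
  also have "\<dots> \<le> real n * P * (p 1 + 2 * (real m + 1) * (p 1 + p 2))"
    using D(2) \<open>0 \<le> P\<close> by (intro mult_left_mono) auto
  finally show ?thesis unfolding moments using \<open>0 \<le> P\<close> by (simp add: mult.commute)
qed

lemma variance_gap_one_small_size:
  fixes a :: "nat \<Rightarrow> nat" and m n :: nat
  defines "p \<equiv> \<lambda>i. real (a i) / real n"
  assumes m: "m \<ge> 2" and a: "sorted_sizes n m a"
  shows "\<bar>Var_X n m a - E_cc n m a (\<lambda>S. real (a 1) - real (X_all m S))\<bar>
           \<le> ((1 - (\<Prod>i\<in>{2..m}. p i)) + 2 * (real m - 1) * p 1)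
               * \<bar>E_cc n m a (\<lambda>S. real (a 1) - real (X_all m S))\<bar>"
proof -
  define r where "r i = (real (a i) - 1) / (real n - 1)" for i
  define P R where "P = (\<Prod>i\<in>{2..m}. p i)" and "R = (\<Prod>i\<in>{2..m}. r i)"
  define k where "k = real (a 1)"
  have sizes: "\<forall>i\<in>{1..m}. 2 \<le> a i \<and> a i \<le> n" using sorted_sizes_bounds[OF a] by auto
  have "2 \<le> a 1" "a 1 \<le> n" using sorted_sizes_bounds[OF a, of 1] m by auto
  then have n: "2 \<le> real n" "2 \<le> k" unfolding k_def by simp_all
  have pr: "0 \<le> r i \<and> r i \<le> p i \<and> p i \<le> 1 \<and> p i - r i \<le> (1 - p i) / (real n - 1)" if "i \<in> {2..m}" for i
    using sorted_sizes_fractions[OF a, of i] that unfolding p_def r_def by auto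
  have split: "(\<Prod>i\<in>{1..m}. f i) = f 1 * (\<Prod>i\<in>{2..m}. f i)" for f :: "nat \<Rightarrow> real"
    using m by (simp add: prod.atLeast_Suc_atMost numeral_2_eq_2)
  have p1: "real n * p 1 = k" "(real n - 1) * r 1 = k - 1" unfolding p_def r_def k_def using n by auto
  have moments: "E_cc n m a (\<lambda>S. real (a 1) - real (X_all m S)) = k - k * P"
    "Var_X n m a = k * P * (1 - (k * P - (k - 1) * R))"
    using coupon_mean_variance(2,3)[OF _ sizes] m
    unfolding split P_def[symmetric] R_def[symmetric] p_def[symmetric] r_def[symmetric] mult.assoc[symmetric] p1
    by (auto simp: k_def)
  have "P \<le> 1" unfolding P_def using pr by (intro prod_le_1) (meson order_trans)
  then have T: "0 \<le> k - k * P" using n by (simp add: mult_left_le)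
  have "\<bar>Var_X n m a - E_cc n m a (\<lambda>S. real (a 1) - real (X_all m S))\<bar>
      \<le> (k - k * P) * ((1 - P) + k * real (card {2..m}) / (real n - 1))"
    unfolding moments P_def R_def using n by (intro scaled_prod_gap_near_one pr) auto
  also have "\<dots> \<le> (k - k * P) * ((1 - P) + 2 * (real m - 1) * p 1)"
  proof -
    have "k * real (card {2..m}) / (real n - 1) = real n / (real n - 1) * ((real m - 1) * p 1)"
      using m n unfolding p_def k_def by (simp add: of_nat_diff)
    also have "\<dots> \<le> 2 * ((real m - 1) * p 1)"
      using m n sorted_sizes_fractions(3)[OF a, of 1] unfolding p_def
      by (intro mult_right_mono) (auto simp: field_simps)
    finally show ?thesis using T by (intro mult_left_mono add_left_mono) (simp_all only: mult.assoc)
  qed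
  finally show ?thesis using T unfolding moments P_def[symmetric] by (simp add: mult.commute)
qed

lemma coupon_moments_complement:
  fixes a :: "nat \<Rightarrow> nat" and m n :: nat
  defines "u \<equiv> \<lambda>i. 1 - real (a i) / real n" and "c \<equiv> real n / (real n - 1)"
  assumes m: "m \<ge> 1" and a: "sorted_sizes n m a"
  shows "Var_X n m a = real n * (\<Prod>i\<in>{1..m}. 1 - u i)
           * (1 - (real n * (\<Prod>i\<in>{1..m}. 1 - u i) - (real n - 1) * (\<Prod>i\<in>{1..m}. 1 - c * u i)))"
    and "E_cc n m a (\<lambda>S. real (X_all m S) + (real m - 1) * real n - (\<Sum>i=1..m. real (a i)))
           = real n * ((\<Prod>i\<in>{1..m}. 1 - u i) - 1 + (\<Sum>i\<in>{1..m}. u i))"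
    and "\<And>i. i \<in> {1..m} \<Longrightarrow> 0 \<le> u i \<and> c * u i \<le> 1"
proof -
  have sizes: "\<forall>i\<in>{1..m}. 2 \<le> a i \<and> a i \<le> n" using sorted_sizes_bounds[OF a] by auto
  have n: "2 \<le> real n" using sorted_sizes_bounds[OF a, of 1] m by auto
  have r: "1 - c * u i = (real (a i) - 1) / (real n - 1)" for i
    unfolding u_def c_def using n by (simp add: field_simps)
  show "Var_X n m a = real n * (\<Prod>i\<in>{1..m}. 1 - u i)
           * (1 - (real n * (\<Prod>i\<in>{1..m}. 1 - u i) - (real n - 1) * (\<Prod>i\<in>{1..m}. 1 - c * u i)))"
  proof -
    have "(\<Prod>i\<in>{1..m}. 1 - c * u i) = (\<Prod>i\<in>{1..m}. (real (a i) - 1) / (real n - 1))" unfolding r ..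
    then show ?thesis using coupon_mean_variance(2)[OF m sizes] unfolding u_def by simp
  qed
  have "(\<Sum>i=1..m. real (a i)) = real n * (real m - (\<Sum>i\<in>{1..m}. u i))"
    unfolding u_def using n by (simp add: sum_subtractf sum_distrib_left)
  then show "E_cc n m a (\<lambda>S. real (X_all m S) + (real m - 1) * real n - (\<Sum>i=1..m. real (a i)))
      = real n * ((\<Prod>i\<in>{1..m}. 1 - u i) - 1 + (\<Sum>i\<in>{1..m}. u i))"
    using coupon_mean_variance(4)[OF m sizes, where c = "(real m - 1) * real n" and d = "\<Sum>i=1..m. real (a i)"]
    unfolding u_def by (simp add: algebra_simps)
  show "0 \<le> u i \<and> c * u i \<le> 1" if "i \<in> {1..m}" for i
    using sorted_sizes_fractions[OF a that] r[of i] unfolding u_def by auto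
qed

lemma variance_gap_large_sizes:
  fixes a :: "nat \<Rightarrow> nat" and m n :: nat
  defines "p \<equiv> \<lambda>i. real (a i) / real n"
  assumes m: "m \<ge> 1" and a: "sorted_sizes n m a"
  shows "\<bar>Var_X n m a - E_cc n m a (\<lambda>S. real (X_all m S) + (real m - 1) * real n - (\<Sum>i=1..m. real (a i)))\<bar>
           \<le> (2 * (\<Sum>i\<in>{1..m}. 1 - p i) + 2 / real n + (1 - (\<Prod>i\<in>{1..m}. p i)))
               * \<bar>E_cc n m a (\<lambda>S. real (X_all m S) + (real m - 1) * real n - (\<Sum>i=1..m. real (a i)))\<bar>"
proof -
  define N c where "N = real n" and "c = N / (N - 1)"
  define u where "u i = 1 - p i" for i
  define P R S where "P = (\<Prod>i\<in>{1..m}. 1 - u i)" and "R = (\<Prod>i\<in>{1..m}. 1 - c * u i)"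
    and "S = (\<Sum>i\<in>{1..m}. u i)"
  define e \<eta> where "e = P - 1 + S" and "\<eta> = (c * S + 1 / (N - 1)) / P"
  note moments = coupon_moments_complement[OF m a]
  have Var_eq: "Var_X n m a = N * P * (1 - (N * P - (N - 1) * R))"
    using moments(1) unfolding N_def c_def P_def R_def u_def p_def by simp
  have T_eq: "E_cc n m a (\<lambda>S. real (X_all m S) + (real m - 1) * real n - (\<Sum>i=1..m. real (a i))) = N * e"
    using moments(2) unfolding N_def e_def P_def S_def u_def p_def by simp
  have N: "2 \<le> N" unfolding N_def using sorted_sizes_bounds[OF a, of 1] m by auto
  have c: "1 \<le> c" "c \<le> 2" unfolding c_def using N by (auto simp: field_simps)
  have u: "0 \<le> u i \<and> c * u i \<le> 1" "0 \<le> 1 - u i \<and> 1 - u i \<le> 1 \<and> (1::real) \<le> 1"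
    if "i \<in> {1..m}" for i
    using moments(3)[OF that] sorted_sizes_fractions(3,4)[OF a that] unfolding u_def p_def c_def N_def by auto
  have "0 < P" unfolding P_def u_def p_def using sorted_sizes_fractions(3)[OF a] by (auto intro!: prod_pos)
  have "P \<le> 1" unfolding P_def using u by (intro prod_le_1) auto
  have "0 \<le> S" unfolding S_def using u by (auto intro!: sum_nonneg)
  have "0 \<le> e" using prod_diff_le_sum_diff[of "{1..m}" "\<lambda>i. 1 - u i" "\<lambda>i. 1"] u
    unfolding e_def P_def S_def by auto
  have gap: "\<bar>(1 - (N * P - (N - 1) * R)) - e\<bar> \<le> \<eta> * e"
    unfolding e_def P_def R_def S_def
  proof (rule complement_prod_second_order)
    show "0 \<le> \<eta>" unfolding \<eta>_def using \<open>0 < P\<close> \<open>0 \<le> S\<close> c N by auto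
    show "c * (\<Sum>i\<in>{1..m}. u i) + 1 / (N - 1) \<le> \<eta> * (\<Prod>i\<in>{1..m}. 1 - u i)"
      using \<open>0 < P\<close> unfolding \<eta>_def P_def[symmetric] S_def[symmetric] by simp
  qed (use N u in \<open>auto simp: c_def\<close>)
  have "N * P * (1 - (N * P - (N - 1) * R)) - N * e = N * (P * ((1 - (N * P - (N - 1) * R)) - e) - (1 - P) * e)"
    by (simp add: algebra_simps)
  then have "\<bar>N * P * (1 - (N * P - (N - 1) * R)) - N * e\<bar>
      = N * \<bar>P * ((1 - (N * P - (N - 1) * R)) - e) - (1 - P) * e\<bar>"
    using N by (simp add: abs_mult)
  also have "\<dots> \<le> N * (P * (\<eta> * e) + (1 - P) * e)"
    using gap \<open>0 < P\<close> \<open>P \<le> 1\<close> \<open>0 \<le> e\<close> N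
    by (intro mult_left_mono abs_triangle_ineq4[THEN order_trans] add_mono)
       (auto simp: abs_mult mult_left_mono)
  also have "\<dots> = (P * \<eta> + (1 - P)) * (N * e)" by (simp add: algebra_simps)
  also have "P * \<eta> = c * S + 1 / (N - 1)" unfolding \<eta>_def using \<open>0 < P\<close> by simp
  also have "(c * S + 1 / (N - 1) + (1 - P)) * (N * e) \<le> (2 * S + 2 / N + (1 - P)) * (N * e)"
    using c N \<open>0 \<le> S\<close> \<open>0 \<le> e\<close> by (intro mult_right_mono add_mono) (auto simp: field_simps)
  finally show ?thesis
    using \<open>0 \<le> e\<close> N unfolding Var_eq T_eq by (simp add: S_def P_def u_def N_def)
qed
lemma fraction_tendsto_one_mono:
  assumes sizes: "eventually (\<lambda>n. sorted_sizes n m (a n)) sequentially"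
    and lim: "(\<lambda>n. real (a n j) / real n) \<longlonglongrightarrow> 1" and "1 \<le> j" "j \<le> i" "i \<le> m"
  shows "(\<lambda>n. real (a n i) / real n) \<longlonglongrightarrow> 1"
proof (rule tendsto_sandwich[OF _ _ lim tendsto_const])
  show "eventually (\<lambda>n. real (a n j) / real n \<le> real (a n i) / real n) sequentially"
    using sizes
    by eventually_elim (use assms(3-5) in \<open>intro divide_right_mono; auto intro: sorted_sizes_mono\<close>)
  show "eventually (\<lambda>n. real (a n i) / real n \<le> 1) sequentially"
    using sizes by eventually_elim (use assms(3-5) in \<open>auto intro: sorted_sizes_fractions(4)\<close>)
qed

lemma coupon_mean_variance_equiv_small:
  assumes m: "m \<ge> 2" and sizes: "eventually (\<lambda>n. sorted_sizes n m (a n)) sequentially"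
    and p1: "(\<lambda>n. real (a n 1) / real n) \<longlonglongrightarrow> 0" and p2: "(\<lambda>n. real (a n 2) / real n) \<longlonglongrightarrow> 0"
  shows "(\<lambda>n. E_cc n m (a n) (\<lambda>S. real (X_all m S))) \<sim>[sequentially] (\<lambda>n. Var_X n m (a n))"
proof (rule asymp_equiv_by_relative_error)
  show "(\<lambda>n. real (a n 1) / real n + 2 * (real m + 1) * (real (a n 1) / real n + real (a n 2) / real n))
          \<longlonglongrightarrow> 0"
    using tendsto_add[OF p1 tendsto_mult[OF tendsto_const tendsto_add[OF p1 p2]]] by simp
  show "eventually (\<lambda>n. \<bar>Var_X n m (a n) - E_cc n m (a n) (\<lambda>S. real (X_all m S))\<bar>
          \<le> (real (a n 1) / real n + 2 * (real m + 1) * (real (a n 1) / real n + real (a n 2) / real n))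
            * \<bar>E_cc n m (a n) (\<lambda>S. real (X_all m S))\<bar>) sequentially"
    using sizes by eventually_elim (rule variance_gap_small_sizes[OF m])
qed

lemma coupon_deficit_variance_equiv:
  assumes m: "m \<ge> 2" and sizes: "eventually (\<lambda>n. sorted_sizes n m (a n)) sequentially"
    and p1: "(\<lambda>n. real (a n 1) / real n) \<longlonglongrightarrow> 0" and p2: "(\<lambda>n. real (a n 2) / real n) \<longlonglongrightarrow> 1"
  shows "(\<lambda>n. E_cc n m (a n) (\<lambda>S. real (a n 1) - real (X_all m S))) \<sim>[sequentially] (\<lambda>n. Var_X n m (a n))"
proof (rule asymp_equiv_by_relative_error)
  have "(\<lambda>n. \<Prod>i\<in>{2..m}. real (a n i) / real n) \<longlonglongrightarrow> (\<Prod>i\<in>{2..m}. 1)"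
    by (intro tendsto_prod fraction_tendsto_one_mono[OF sizes p2]) auto
  then have "(\<lambda>n. (1 - (\<Prod>i\<in>{2..m}. real (a n i) / real n)) + 2 * (real m - 1) * (real (a n 1) / real n))
          \<longlonglongrightarrow> (1 - (\<Prod>i\<in>{2..m}. 1)) + 2 * (real m - 1) * 0"
    by (intro tendsto_add tendsto_diff tendsto_mult tendsto_const p1)
  then show "(\<lambda>n. (1 - (\<Prod>i\<in>{2..m}. real (a n i) / real n)) + 2 * (real m - 1) * (real (a n 1) / real n))
          \<longlonglongrightarrow> 0"
    by simp
  show "eventually (\<lambda>n. \<bar>Var_X n m (a n) - E_cc n m (a n) (\<lambda>S. real (a n 1) - real (X_all m S))\<bar>
          \<le> ((1 - (\<Prod>i\<in>{2..m}. real (a n i) / real n)) + 2 * (real m - 1) * (real (a n 1) / real n))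
            * \<bar>E_cc n m (a n) (\<lambda>S. real (a n 1) - real (X_all m S))\<bar>) sequentially"
    using sizes by eventually_elim (rule variance_gap_one_small_size[OF m])
qed

lemma coupon_excess_variance_equiv:
  assumes m: "m \<ge> 1" and sizes: "eventually (\<lambda>n. sorted_sizes n m (a n)) sequentially"
    and p1: "(\<lambda>n. real (a n 1) / real n) \<longlonglongrightarrow> 1"
  shows "(\<lambda>n. E_cc n m (a n) (\<lambda>S. real (X_all m S) + (real m - 1) * real n - (\<Sum>i=1..m. real (a n i))))
           \<sim>[sequentially] (\<lambda>n. Var_X n m (a n))"
proof (rule asymp_equiv_by_relative_error)
  have p: "(\<lambda>n. real (a n i) / real n) \<longlonglongrightarrow> 1" if "i \<in> {1..m}" for i
    using fraction_tendsto_one_mono[OF sizes p1] that by auto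
  have "(\<lambda>n. 2 * (\<Sum>i\<in>{1..m}. 1 - real (a n i) / real n) + 2 / real n
            + (1 - (\<Prod>i\<in>{1..m}. real (a n i) / real n)))
          \<longlonglongrightarrow> 2 * (\<Sum>i\<in>{1..m}. 1 - 1) + 0 + (1 - (\<Prod>i\<in>{1..m}. 1))"
    by (intro tendsto_intros p lim_const_over_n)
  then show "(\<lambda>n. 2 * (\<Sum>i\<in>{1..m}. 1 - real (a n i) / real n) + 2 / real n
            + (1 - (\<Prod>i\<in>{1..m}. real (a n i) / real n))) \<longlonglongrightarrow> 0"
    by simp
  show "eventually (\<lambda>n. \<bar>Var_X n m (a n) - E_cc n m (a n)
            (\<lambda>S. real (X_all m S) + (real m - 1) * real n - (\<Sum>i=1..m. real (a n i)))\<bar>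
          \<le> (2 * (\<Sum>i\<in>{1..m}. 1 - real (a n i) / real n) + 2 / real n
              + (1 - (\<Prod>i\<in>{1..m}. real (a n i) / real n)))
            * \<bar>E_cc n m (a n) (\<lambda>S. real (X_all m S) + (real m - 1) * real n - (\<Sum>i=1..m. real (a n i)))\<bar>)
          sequentially"
    using sizes by eventually_elim (rule variance_gap_large_sizes[OF m])
qed

theorem lemma2:
  fixes m :: nat and a :: "nat \<Rightarrow> nat \<Rightarrow> nat"
  assumes m2: "m \<ge> 2"
    and A2a: "\<And>i. i \<in> {1..m} \<Longrightarrow> filterlim (\<lambda>n. a n i) at_top sequentially"
    and A2b: "\<And>i. i \<in> {1..m} \<Longrightarrow> filterlim (\<lambda>n. n - a n i) at_top sequentially"
    and A3: "eventually (\<lambda>n. 1 \<le> a n 1 \<and> (\<forall>i\<in>{1..<m}. a n i \<le> a n (Suc i)) \<and> a n m \<le> n - 1)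
               sequentially"
    and A4: "\<And>i. i \<in> {1..m} \<Longrightarrow> \<exists>\<alpha>\<in>{0..1::real}. (\<lambda>n. real (a n i) / real n) \<longlonglongrightarrow> \<alpha>"
  shows
    "((\<lambda>n. real (a n 1) / real n) \<longlonglongrightarrow> 0 \<and> (\<lambda>n. real (a n 2) / real n) \<longlonglongrightarrow> 0 \<longrightarrow>
        (\<lambda>n. E_cc n m (a n) (\<lambda>S. real (X_all m S))) \<sim>[sequentially] (\<lambda>n. Var_X n m (a n)))
   \<and> ((\<lambda>n. real (a n 1) / real n) \<longlonglongrightarrow> 0 \<and> (\<lambda>n. real (a n 2) / real n) \<longlonglongrightarrow> 1 \<longrightarrow>
        (\<lambda>n. E_cc n m (a n) (\<lambda>S. real (a n 1) - real (X_all m S)))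
          \<sim>[sequentially] (\<lambda>n. Var_X n m (a n)))
   \<and> ((\<lambda>n. real (a n 1) / real n) \<longlonglongrightarrow> 1 \<and> (\<lambda>n. real (a n 2) / real n) \<longlonglongrightarrow> 1 \<longrightarrow>
        (\<lambda>n. E_cc n m (a n)
               (\<lambda>S. real (X_all m S) + (real m - 1) * real n - (\<Sum>i=1..m. real (a n i))))
          \<sim>[sequentially] (\<lambda>n. Var_X n m (a n)))"
proof -
  have "eventually (\<lambda>n. 2 \<le> a n 1) sequentially"
    using A2a[of 1] m2 by (simp add: filterlim_at_top)
  with A3 have sizes: "eventually (\<lambda>n. sorted_sizes n m (a n)) sequentially"
    by eventually_elim (auto simp: sorted_sizes_def)
  show ?thesis
    using coupon_mean_variance_equiv_small[OF m2 sizes] coupon_deficit_variance_equiv[OF m2 sizes]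
      coupon_excess_variance_equiv[OF _ sizes] m2 by simp
qed

end
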